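(* Fix integers $n\ge 1$ and $N\ge 1$, tumor parameters $\alpha_0,\beta_0>0$, a constant $\tau(N)\in\mathbb{R}$, and for each $m\in\{1,\dots,n\}$ numbers $D_m>0$, integers $N_m\ge 1$, and $0<\rho_m^{\min}\le\rho_m^{\max}<\infty$. Index the organs so that $D_1^2/N_1\le D_2^2/N_2\le\cdots\le D_n^2/N_n$. Consider the robust problem $$\text{(RFRAC(N))}\quad f^*(N)=\max_{\vec d\in\mathbb{R}^N}\ \alpha_0\sum_{t=1}^N d_t+\beta_0\sum_{t=1}^N d_t^2-\tau(N)$$ subject to $\vec d\ge 0$ and, for every $m\in\{1,\dots,n\}$ and every $\tilde\rho_m\in[\rho_m^{\min},\rho_m^{\max}]$, $$\sum_{t=1}^N d_t+\tilde\rho_m\Big(\sum_{t=1}^N d_t^2-\frac{D_m^2}{N_m}\Big)\le D_m .$$ For $k\in\{0,1,\dots,n\}$, with $\mathrm{RC}^+_m=D_m+\rho_m^{\max}D_m^2/N_m$ and $\mathrm{RC}^-_m=D_m+\rho_m^{\min}D_m^2/N_m$, define the subproblem $$\text{(kSub(N))}\quad f^*(N;k)=\max_{\vec d\in\mathbb{R}^N}\ \alpha_0\sum_{t=1}^N d_t+\beta_0\sum_{t=1}^N d_t^2-\tau(N)$$ subject to $\vec d\ge 0$; $\sum_t d_t+\rho_m^{\max}\sum_t d_t^2\le \mathrm{RC}^+_m$ for $m=1,\dots,k$; $\sum_t d_t+\rho_m^{\min}\sum_t d_t^2\le \mathrm{RC}^-_m$ for $m=k+1,\dots,n$; $\sum_t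 d_t^2\ge D_k^2/N_k$ if $k\ne 0$; and $\sum_t d_t^2\le D_{k+1}^2/N_{k+1}$ if $k\ne n$. Then (RFRAC(N)) can be solved by solving the $n+1$ subproblems (kSub(N)), $k=0,\dots,n$, and picking a solution with the largest objective value: that is, $f^*(N)=\max\{f^*(N;k): k\in\{0,\dots,n\},\ \text{(kSub(N)) feasible}\}$, and an optimal solution of a subproblem attaining this maximum is optimal for (RFRAC(N)).
   Context: This is the robust counterpart (for a fixed number $N$ of treatment fractions) of the linear-quadratic fractionation problem in radiotherapy: $\vec d=(d_1,\dots,d_N)$ are the doses per fraction, the objective is the tumor biological effect with proliferation correction $\tau(N)$ (a constant once $N$ is fixed), and for each organ-at-risk $m$ the unknown parameter $\tilde\rho_m=\beta_m/\alpha_m$ lies in the known interval $[\rho_m^{\min},\rho_m^{\max}]$; $D_m$ is a tolerance dose delivered conventionally in $N_m$ equal fractions. Terms whose index condition is vacuous (e.g. the constraints for $m=1,\dots,k$ when $k=0$) are omitted. *)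

theory Defs
  imports "HOL-Analysis.Analysis"
begin

text \<open>Dose vectors are functions d :: nat => real, of which only the entries
  d 1, ..., d N (the N fractions) matter.\<close>

definition tumor_obj :: "nat \<Rightarrow> real \<Rightarrow> real \<Rightarrow> real \<Rightarrow> (nat \<Rightarrow> real) \<Rightarrow> real" where
  "tumor_obj N a0 b0 tauN d = a0 * (\<Sum>t=1..N. d t) + b0 * (\<Sum>t=1..N. (d t)^2) - tauN"

definition rfrac_feas ::
  "nat \<Rightarrow> nat \<Rightarrow> (nat \<Rightarrow> real) \<Rightarrow> (nat \<Rightarrow> nat) \<Rightarrow> (nat \<Rightarrow> real) \<Rightarrow> (nat \<Rightarrow> real)
     \<Rightarrow> (nat \<Rightarrow> real) set" where
  "rfrac_feas N n D Nm rmin rmax =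
     {d. (\<forall>t\<in>{1..N}. 0 \<le> d t) \<and>
         (\<forall>m\<in>{1..n}. \<forall>r\<in>{rmin m..rmax m}.
            (\<Sum>t=1..N. d t) + r * ((\<Sum>t=1..N. (d t)^2) - (D m)^2 / real (Nm m)) \<le> D m)}"

definition ksub_feas ::
  "nat \<Rightarrow> nat \<Rightarrow> (nat \<Rightarrow> real) \<Rightarrow> (nat \<Rightarrow> nat) \<Rightarrow> (nat \<Rightarrow> real) \<Rightarrow> (nat \<Rightarrow> real)
     \<Rightarrow> nat \<Rightarrow> (nat \<Rightarrow> real) set" where
  "ksub_feas N n D Nm rmin rmax k =
     {d. (\<forall>t\<in>{1..N}. 0 \<le> d t) \<and>
         (\<forall>m\<in>{1..k}. (\<Sum>t=1..N. d t) + rmax m * (\<Sum>t=1..N. (d t)^2)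
                        \<le> D m + rmax m * (D m)^2 / real (Nm m)) \<and>
         (\<forall>m\<in>{k+1..n}. (\<Sum>t=1..N. d t) + rmin m * (\<Sum>t=1..N. (d t)^2)
                        \<le> D m + rmin m * (D m)^2 / real (Nm m)) \<and>
         (k \<noteq> 0 \<longrightarrow> (\<Sum>t=1..N. (d t)^2) \<ge> (D k)^2 / real (Nm k)) \<and>
         (k \<noteq> n \<longrightarrow> (\<Sum>t=1..N. (d t)^2) \<le> (D (k+1))^2 / real (Nm (k+1)))}"

definition is_max_value :: "('a \<Rightarrow> real) \<Rightarrow> 'a set \<Rightarrow> real \<Rightarrow> bool" where
  "is_max_value f S v \<longleftrightarrow> (\<exists>x\<in>S. f x = v) \<and> (\<forall>x\<in>S. f x \<le> v)"

definition is_optimal :: "('a \<Rightarrow> real) \<Rightarrow> 'a set \<Rightarrow> 'a \<Rightarrow> bool" where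
  "is_optimal f S x \<longleftrightarrow> x \<in> S \<and> (\<forall>y\<in>S. f y \<le> f x)"

end

theory Submission
  imports Defs
begin

text \<open>Write \<open>s = \<Sum>\<^sub>t d\<^sub>t\<close>, \<open>q = \<Sum>\<^sub>t d\<^sub>t\<^sup>2\<close> and \<open>Q\<^sub>m = D\<^sub>m\<^sup>2/N\<^sub>m\<close>. The robust constraint
  of organ \<open>m\<close> is affine in \<open>\<rho>\<close>, so it holds on all of \<open>[rmin m, rmax m]\<close> iff it holds at
  both end points; the end point \<open>rmax m\<close> is the binding one when \<open>q \<ge> Q\<^sub>m\<close> and
  \<open>rmin m\<close> when \<open>q \<le> Q\<^sub>m\<close>. As the \<open>Q\<^sub>m\<close> are sorted, the position \<open>k\<close> of \<open>q\<close> among them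
  decides the binding end point for every organ at once, so the robust feasible set is
  the union of the \<open>n + 1\<close> subproblem feasible sets. Each of these is closed and bounded
  in the coordinates \<open>1..N\<close> on which everything depends, so the objective attains its
  maximum there, and the maximum over a finite union is the largest of the maxima.\<close>

lemma is_max_value_Sup:
  assumes "x \<in> S" and "\<forall>y\<in>S. f y \<le> f x"
  shows "is_max_value f S (Sup (f ` S))"
proof -
  have "Sup (f ` S) = f x"
    using assms by (intro cSup_eq_maximum) auto
  with assms show ?thesis
    unfolding is_max_value_def by metis
qed

lemma is_max_value_UN:
  assumes "finite K" and "(\<Union>k\<in>K. F k) \<noteq> {}"
    and max_F: "\<And>k. k \<in> K \<Longrightarrow> F k \<noteq> {} \<Longrightarrow> is_max_value f (F k) (Sup (f ` F k))"
  shows "is_max_value f (\<Union>k\<in>K. F k) (Max {Sup (f ` F k) | k. k \<in> K \<and> F k \<noteq> {}})"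
proof -
  define V where "V = {Sup (f ` F k) | k. k \<in> K \<and> F k \<noteq> {}}"
  have "V \<subseteq> (\<lambda>k. Sup (f ` F k)) ` K"
    unfolding V_def by auto
  then have "finite V"
    using \<open>finite K\<close> by (simp add: finite_subset)
  have "V \<noteq> {}"
    using assms(2) unfolding V_def by auto
  then have "Max V \<in> V"
    using \<open>finite V\<close> by simp
  then obtain k0 where "k0 \<in> K" "F k0 \<noteq> {}" "Max V = Sup (f ` F k0)"
    unfolding V_def by auto
  with max_F obtain x where x: "x \<in> F k0" "f x = Max V"
    unfolding is_max_value_def by metis
  have "f y \<le> Max V" if "y \<in> F k" "k \<in> K" for y k
  proof -
    have "f y \<le> Sup (f ` F k)"
      using max_F[of k] that unfolding is_max_value_def by blast
    also have "\<dots> \<le> Max V"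
      using that \<open>finite V\<close> unfolding V_def by (intro Max_ge) auto
    finally show ?thesis .
  qed
  with x \<open>k0 \<in> K\<close> show ?thesis
    unfolding is_max_value_def V_def by blast
qed

lemma is_optimal_if_is_max_value:
  assumes "is_max_value f S v" and "x \<in> S" and "f x = v"
  shows "is_optimal f S x"
  using assms unfolding is_max_value_def is_optimal_def by simp

lemma continuous_attains_sup_coordinate_bounded:
  fixes f :: "('a \<Rightarrow> real) \<Rightarrow> real"
  assumes "closed F" and "F \<noteq> {}" and "continuous_on UNIV f"
    and bounded: "\<And>d t. d \<in> F \<Longrightarrow> t \<in> I \<Longrightarrow> \<bar>d t\<bar> \<le> B"
    and F_local: "\<And>d d'. d \<in> F \<Longrightarrow> (\<And>t. t \<in> I \<Longrightarrow> d' t = d t) \<Longrightarrow> d' \<in> F"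
    and f_local: "\<And>d d'. (\<And>t. t \<in> I \<Longrightarrow> d' t = d t) \<Longrightarrow> f d' = f d"
  shows "\<exists>x\<in>F. \<forall>y\<in>F. f y \<le> f x"
proof -
  define P where "P d = (\<lambda>t. if t \<in> I then d t else 0)" for d :: "'a \<Rightarrow> real"
  define K where "K = Pi\<^sub>E UNIV (\<lambda>t. if t \<in> I then {-B..B} else {0::real})"
  \<comment> \<open>Tychonoff's theorem, so \<open>I\<close> need not be finite\<close>
  have "compactin (product_topology (\<lambda>_. euclidean) UNIV) K"
    unfolding K_def compactin_PiE by auto
  then have "compact (K \<inter> F)"
    using \<open>closed F\<close> by (intro compact_Int_closed) (simp_all add: euclidean_product_topology)
  have f_P: "f (P d) = f d" for d
    by (rule f_local) (simp add: P_def)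
  have P_in: "P d \<in> K \<inter> F" if "d \<in> F" for d
    using bounded[OF that] F_local[OF that] unfolding K_def P_def by (force simp: abs_le_iff)
  then have "K \<inter> F \<noteq> {}"
    using \<open>F \<noteq> {}\<close> by blast
  then obtain x where "x \<in> K \<inter> F" and x_max: "\<forall>y\<in>K \<inter> F. f y \<le> f x"
    using continuous_attains_sup[OF \<open>compact (K \<inter> F)\<close>] continuous_on_subset[OF assms(3)]
    by blast
  moreover have "f y \<le> f x" if "y \<in> F" for y
    using x_max P_in[OF that] f_P by metis
  ultimately show ?thesis
    by blast
qed

lemma lift_Suc_mono_le_interval:
  fixes Q :: "nat \<Rightarrow> 'a::preorder"
  assumes step: "\<And>m. a \<le> m \<Longrightarrow> m < b \<Longrightarrow> Q m \<le> Q (Suc m)"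
    and "a \<le> i" and "i \<le> j" and "j \<le> b"
  shows "Q i \<le> Q j"
  using \<open>i \<le> j\<close> \<open>j \<le> b\<close>
proof (induction j rule: dec_induct)
  case (step j)
  then have "Q i \<le> Q j"
    by simp
  also have "Q j \<le> Q (Suc j)"
    using step \<open>a \<le> i\<close> assms(1) by simp
  finally show ?case .
qed simp

lemma obtain_bracketing_index:
  fixes Q :: "nat \<Rightarrow> 'a::linorder"
  obtains k where "k \<le> n" and "k \<noteq> 0 \<Longrightarrow> Q k \<le> q" and "k \<noteq> n \<Longrightarrow> q \<le> Q (k + 1)"
proof -
  define A where "A = {m. m \<le> n \<and> (m = 0 \<or> Q m \<le> q)}"
  define k where "k = Max A"
  have "finite A" "0 \<in> A"
    unfolding A_def by auto
  then have "k \<in> A"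
    unfolding k_def by (intro Max_in) auto
  then have "k \<le> n" and "k \<noteq> 0 \<Longrightarrow> Q k \<le> q"
    unfolding A_def by auto
  moreover have "q \<le> Q (k + 1)" if "k \<noteq> n"
  proof (rule ccontr)
    assume "\<not> q \<le> Q (k + 1)"
    with that \<open>k \<le> n\<close> have "k + 1 \<in> A"
      unfolding A_def by auto
    with \<open>finite A\<close> have "k + 1 \<le> k"
      unfolding k_def by (rule Max_ge)
    then show False
      by simp
  qed
  ultimately show ?thesis
    using that by blast
qed

lemma affine_le_on_interval_iff:
  fixes a b c x y :: real
  assumes "a \<le> b"
  shows "(\<forall>r\<in>{a..b}. x + r * y \<le> c) \<longleftrightarrow> x + a * y \<le> c \<and> x + b * y \<le> c"
proof (intro iffI ballI)
  fix r assume ends: "x + a * y \<le> c \<and> x + b * y \<le> c" and "r \<in> {a..b}"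
  then have "r * y \<le> a * y \<or> r * y \<le> b * y"
    by (cases "0 \<le> y") (auto intro: mult_right_mono mult_right_mono_neg)
  with ends show "x + r * y \<le> c"
    by linarith
qed (use assms in auto)

lemma ksub_feas_subset_rfrac_feas:
  assumes "k \<le> n"
    and sorted: "\<And>m. 1 \<le> m \<Longrightarrow> m < n \<Longrightarrow> (D m)^2 / real (Nm m) \<le> (D (m+1))^2 / real (Nm (m+1))"
    and rmin_le_rmax: "\<And>m. m \<in> {1..n} \<Longrightarrow> rmin m \<le> rmax m"
  shows "ksub_feas N n D Nm rmin rmax k \<subseteq> rfrac_feas N n D Nm rmin rmax"
proof
  fix d assume d: "d \<in> ksub_feas N n D Nm rmin rmax k"
  define Q where "Q m = (D m)^2 / real (Nm m)" for m
  define s where "s = (\<Sum>t=1..N. d t)"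
  define q where "q = (\<Sum>t=1..N. (d t)^2)"
  have Q_mono: "Q i \<le> Q j" if "1 \<le> i" "i \<le> j" "j \<le> n" for i j
  proof (rule lift_Suc_mono_le_interval[of 1 n])
    show "Q m \<le> Q (Suc m)" if "1 \<le> m" "m < n" for m
      using sorted[OF that] by (simp add: Q_def)
  qed (use that in auto)
  have "s + rmin m * (q - Q m) \<le> D m \<and> s + rmax m * (q - Q m) \<le> D m" if m: "m \<in> {1..n}" for m
  proof (cases "m \<le> k")
    case True
    then have "Q m \<le> q"
      using d Q_mono[of m k] m \<open>k \<le> n\<close> by (auto simp: ksub_feas_def Q_def q_def)
    then have "rmin m * (q - Q m) \<le> rmax m * (q - Q m)"
      using rmin_le_rmax[OF m] by (simp add: mult_right_mono)
    moreover have "s + rmax m * q \<le> D m + rmax m * Q m"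
      using d True m by (simp add: ksub_feas_def Q_def q_def s_def)
    ultimately show ?thesis
      unfolding right_diff_distrib by (intro conjI; linarith)
  next
    case False
    then have "q \<le> Q m"
      using d Q_mono[of "k + 1" m] m by (auto simp: ksub_feas_def Q_def q_def)
    then have "rmax m * (q - Q m) \<le> rmin m * (q - Q m)"
      using rmin_le_rmax[OF m] by (simp add: mult_right_mono_neg)
    moreover have "s + rmin m * q \<le> D m + rmin m * Q m"
      using d False m by (simp add: ksub_feas_def Q_def q_def s_def)
    ultimately show ?thesis
      unfolding right_diff_distrib by (intro conjI; linarith)
  qed
  then have "\<forall>r\<in>{rmin m..rmax m}. s + r * (q - Q m) \<le> D m" if "m \<in> {1..n}" for m
    using that by (simp add: affine_le_on_interval_iff rmin_le_rmax)
  with d show "d \<in> rfrac_feas N n D Nm rmin rmax"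
    by (simp add: rfrac_feas_def ksub_feas_def s_def q_def Q_def)
qed

lemma rfrac_feas_subset_UN_ksub_feas:
  assumes rmin_le_rmax: "\<And>m. m \<in> {1..n} \<Longrightarrow> rmin m \<le> rmax m"
  shows "rfrac_feas N n D Nm rmin rmax \<subseteq> (\<Union>k\<le>n. ksub_feas N n D Nm rmin rmax k)"
proof
  fix d assume d: "d \<in> rfrac_feas N n D Nm rmin rmax"
  define Q where "Q m = (D m)^2 / real (Nm m)" for m
  define s where "s = (\<Sum>t=1..N. d t)"
  define q where "q = (\<Sum>t=1..N. (d t)^2)"
  have ends: "s + rmin m * q \<le> D m + rmin m * Q m \<and> s + rmax m * q \<le> D m + rmax m * Q m"
    if m: "m \<in> {1..n}" for m
  proof -
    have "\<forall>r\<in>{rmin m..rmax m}. s + r * (q - Q m) \<le> D m"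
      using d m by (simp add: rfrac_feas_def s_def q_def Q_def)
    then have "s + rmin m * (q - Q m) \<le> D m \<and> s + rmax m * (q - Q m) \<le> D m"
      by (simp only: affine_le_on_interval_iff[OF rmin_le_rmax[OF m]])
    then show ?thesis
      unfolding right_diff_distrib by (intro conjI; linarith)
  qed
  obtain k where "k \<le> n" and lower: "k \<noteq> 0 \<Longrightarrow> Q k \<le> q" and upper: "k \<noteq> n \<Longrightarrow> q \<le> Q (k + 1)"
    using obtain_bracketing_index by metis
  have "d \<in> ksub_feas N n D Nm rmin rmax k"
    unfolding ksub_feas_def mem_Collect_eq s_def[symmetric] q_def[symmetric]
  proof (intro conjI ballI impI)
    show "0 \<le> d t" if "t \<in> {1..N}" for t
      using d that by (simp add: rfrac_feas_def)
    show "s + rmax m * q \<le> D m + rmax m * (D m)^2 / real (Nm m)" if "m \<in> {1..k}" for m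
      using ends[of m] that \<open>k \<le> n\<close> by (simp add: Q_def)
    show "s + rmin m * q \<le> D m + rmin m * (D m)^2 / real (Nm m)" if "m \<in> {k+1..n}" for m
      using ends[of m] that by (simp add: Q_def)
  qed (use lower upper in \<open>simp_all add: Q_def q_def\<close>)
  with \<open>k \<le> n\<close> show "d \<in> (\<Union>k\<le>n. ksub_feas N n D Nm rmin rmax k)"
    by blast
qed

lemma rfrac_feas_eq_UN_ksub_feas:
  assumes "\<And>m. 1 \<le> m \<Longrightarrow> m < n \<Longrightarrow> (D m)^2 / real (Nm m) \<le> (D (m+1))^2 / real (Nm (m+1))"
    and "\<And>m. m \<in> {1..n} \<Longrightarrow> rmin m \<le> rmax m"
  shows "rfrac_feas N n D Nm rmin rmax = (\<Union>k\<le>n. ksub_feas N n D Nm rmin rmax k)"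
proof (rule subset_antisym)
  show "rfrac_feas N n D Nm rmin rmax \<subseteq> (\<Union>k\<le>n. ksub_feas N n D Nm rmin rmax k)"
    using assms(2) by (rule rfrac_feas_subset_UN_ksub_feas)
  show "(\<Union>k\<le>n. ksub_feas N n D Nm rmin rmax k) \<subseteq> rfrac_feas N n D Nm rmin rmax"
    by (intro UN_least ksub_feas_subset_rfrac_feas assms) simp_all
qed

lemma zero_in_rfrac_feas:
  assumes "\<And>m. m \<in> {1..n} \<Longrightarrow> 0 \<le> D m \<and> 0 \<le> rmin m"
  shows "(\<lambda>_. 0) \<in> rfrac_feas N n D Nm rmin rmax"
  unfolding rfrac_feas_def
proof (intro CollectI conjI ballI)
  fix m r assume m: "m \<in> {1..n}" and "r \<in> {rmin m..rmax m}"
  with assms[OF m] have "0 \<le> r * (D m)^2 / real (Nm m)"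
    by simp
  with assms[OF m] show "(\<Sum>t=1..N. 0) + r * ((\<Sum>t=1..N. 0^2) - (D m)^2 / real (Nm m)) \<le> D m"
    by simp
qed simp

lemma rfrac_feas_coordinate_bounded:
  assumes "1 \<le> n" and "0 \<le> rmin 1" and "rmin 1 \<le> rmax 1"
    and d: "d \<in> rfrac_feas N n D Nm rmin rmax" and "t \<in> {1..N}"
  shows "\<bar>d t\<bar> \<le> D 1 + rmin 1 * (D 1)^2 / real (Nm 1)"
proof -
  define s where "s = (\<Sum>t=1..N. d t)"
  define q where "q = (\<Sum>t=1..N. (d t)^2)"
  have nonneg: "\<forall>t\<in>{1..N}. 0 \<le> d t"
    and "s + rmin 1 * (q - (D 1)^2 / real (Nm 1)) \<le> D 1"
    using d assms(1-3) by (auto simp: rfrac_feas_def s_def q_def)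
  moreover have "0 \<le> rmin 1 * q"
    unfolding q_def using \<open>0 \<le> rmin 1\<close> by (simp add: sum_nonneg)
  moreover have "d t \<le> s"
    unfolding s_def using nonneg \<open>t \<in> {1..N}\<close> by (intro member_le_sum) auto
  ultimately show ?thesis
    using \<open>t \<in> {1..N}\<close> by (simp add: algebra_simps)
qed

lemma closed_ksub_feas: "closed (ksub_feas N n D Nm rmin rmax k)"
  unfolding ksub_feas_def Ball_def
  by (intro closed_Collect_conj closed_Collect_all closed_Collect_imp open_Collect_const
      closed_Collect_le continuous_intros continuous_on_product_coordinates)

lemma ksub_feas_is_max_value:
  assumes "k \<le> n" and "1 \<le> n" and "0 \<le> rmin 1"
    and sorted: "\<And>m. 1 \<le> m \<Longrightarrow> m < n \<Longrightarrow> (D m)^2 / real (Nm m) \<le> (D (m+1))^2 / real (Nm (m+1))"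
    and rmin_le_rmax: "\<And>m. m \<in> {1..n} \<Longrightarrow> rmin m \<le> rmax m"
    and "ksub_feas N n D Nm rmin rmax k \<noteq> {}"
  shows "is_max_value (tumor_obj N a0 b0 tauN) (ksub_feas N n D Nm rmin rmax k)
           (Sup (tumor_obj N a0 b0 tauN ` ksub_feas N n D Nm rmin rmax k))"
proof -
  have "\<exists>x\<in>ksub_feas N n D Nm rmin rmax k. \<forall>y\<in>ksub_feas N n D Nm rmin rmax k.
          tumor_obj N a0 b0 tauN y \<le> tumor_obj N a0 b0 tauN x"
  proof (rule continuous_attains_sup_coordinate_bounded)
    show "closed (ksub_feas N n D Nm rmin rmax k)"
      by (rule closed_ksub_feas)
    show "continuous_on UNIV (tumor_obj N a0 b0 tauN)"
      unfolding tumor_obj_def by (intro continuous_intros continuous_on_product_coordinates)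
    show "\<bar>d t\<bar> \<le> D 1 + rmin 1 * (D 1)^2 / real (Nm 1)"
      if "d \<in> ksub_feas N n D Nm rmin rmax k" "t \<in> {1..N}" for d t
    proof (rule rfrac_feas_coordinate_bounded)
      have "ksub_feas N n D Nm rmin rmax k \<subseteq> rfrac_feas N n D Nm rmin rmax"
        using \<open>k \<le> n\<close> sorted rmin_le_rmax by (rule ksub_feas_subset_rfrac_feas)
      with that show "d \<in> rfrac_feas N n D Nm rmin rmax"
        by blast
    qed (use that assms(2,3) rmin_le_rmax[of 1] in auto)
    fix d d' :: "nat \<Rightarrow> real"
    assume agree: "\<And>t. t \<in> {1..N} \<Longrightarrow> d' t = d t"
    then have sums: "(\<Sum>t=1..N. d' t) = (\<Sum>t=1..N. d t)" "(\<Sum>t=1..N. (d' t)^2) = (\<Sum>t=1..N. (d t)^2)"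
      by (auto intro: sum.cong)
    then show "tumor_obj N a0 b0 tauN d' = tumor_obj N a0 b0 tauN d"
      by (simp add: tumor_obj_def)
    show "d' \<in> ksub_feas N n D Nm rmin rmax k" if "d \<in> ksub_feas N n D Nm rmin rmax k"
      using that agree by (simp add: ksub_feas_def sums)
  qed fact
  then obtain x where "x \<in> ksub_feas N n D Nm rmin rmax k"
    and "\<forall>y\<in>ksub_feas N n D Nm rmin rmax k. tumor_obj N a0 b0 tauN y \<le> tumor_obj N a0 b0 tauN x" ..
  then show ?thesis
    by (rule is_max_value_Sup)
qed

theorem mainTheorem1:
  fixes n N :: nat and a0 b0 tauN :: real
    and D rmin rmax :: "nat \<Rightarrow> real" and Nm :: "nat \<Rightarrow> nat"
  assumes "n \<ge> 1" and "N \<ge> 1" and "a0 > 0" and "b0 > 0"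
    and "\<forall>m\<in>{1..n}. D m > 0 \<and> Nm m \<ge> 1 \<and> 0 < rmin m \<and> rmin m \<le> rmax m"
    and "\<forall>m. 1 \<le> m \<and> m < n \<longrightarrow> (D m)^2 / real (Nm m) \<le> (D (m+1))^2 / real (Nm (m+1))"
  shows "{k. k \<le> n \<and> ksub_feas N n D Nm rmin rmax k \<noteq> {}} \<noteq> {}
    \<and> (\<forall>k\<le>n. ksub_feas N n D Nm rmin rmax k \<noteq> {} \<longrightarrow>
          is_max_value (tumor_obj N a0 b0 tauN) (ksub_feas N n D Nm rmin rmax k)
            (Sup (tumor_obj N a0 b0 tauN ` ksub_feas N n D Nm rmin rmax k)))
    \<and> is_max_value (tumor_obj N a0 b0 tauN) (rfrac_feas N n D Nm rmin rmax)
        (Max {Sup (tumor_obj N a0 b0 tauN ` ksub_feas N n D Nm rmin rmax k) | k.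
               k \<le> n \<and> ksub_feas N n D Nm rmin rmax k \<noteq> {}})
    \<and> (\<forall>k\<le>n. \<forall>d. is_optimal (tumor_obj N a0 b0 tauN) (ksub_feas N n D Nm rmin rmax k) d
          \<and> tumor_obj N a0 b0 tauN d = Max {Sup (tumor_obj N a0 b0 tauN ` ksub_feas N n D Nm rmin rmax j) | j.
               j \<le> n \<and> ksub_feas N n D Nm rmin rmax j \<noteq> {}}
          \<longrightarrow> is_optimal (tumor_obj N a0 b0 tauN) (rfrac_feas N n D Nm rmin rmax) d)"
proof -
  define F where "F k = ksub_feas N n D Nm rmin rmax k" for k
  define f where "f = tumor_obj N a0 b0 tauN"
  have sorted: "\<And>m. 1 \<le> m \<Longrightarrow> m < n \<Longrightarrow> (D m)^2 / real (Nm m) \<le> (D (m+1))^2 / real (Nm (m+1))"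
    and rmin_le_rmax: "\<And>m. m \<in> {1..n} \<Longrightarrow> rmin m \<le> rmax m"
    and rmin_nonneg: "0 \<le> rmin 1"
    using assms(1,5,6) by (auto simp: less_imp_le)
  have R_eq: "rfrac_feas N n D Nm rmin rmax = (\<Union>k\<le>n. F k)"
    unfolding F_def using sorted rmin_le_rmax by (rule rfrac_feas_eq_UN_ksub_feas)
  have "(\<lambda>_. 0) \<in> rfrac_feas N n D Nm rmin rmax"
    using assms(5) by (intro zero_in_rfrac_feas) (auto simp: less_imp_le)
  then have R_ne: "(\<Union>k\<le>n. F k) \<noteq> {}"
    unfolding R_eq by blast
  have max_F: "is_max_value f (F k) (Sup (f ` F k))" if "k \<le> n" "F k \<noteq> {}" for k
    using that(1) assms(1) rmin_nonneg sorted rmin_le_rmax that(2)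
    unfolding F_def f_def by (rule ksub_feas_is_max_value)
  have max_R: "is_max_value f (\<Union>k\<le>n. F k) (Max {Sup (f ` F k) | k. k \<le> n \<and> F k \<noteq> {}})"
    using is_max_value_UN[of "{..n}" F f] R_ne max_F by simp
  have optimal_R: "is_optimal f (\<Union>k\<le>n. F k) d"
    if "k \<le> n" "is_optimal f (F k) d" "f d = Max {Sup (f ` F j) | j. j \<le> n \<and> F j \<noteq> {}}" for k d
  proof (rule is_optimal_if_is_max_value[OF max_R])
    show "d \<in> (\<Union>k\<le>n. F k)"
      using that(1,2) unfolding is_optimal_def by blast
  qed (rule that(3))
  show ?thesis
    unfolding F_def[symmetric] f_def[symmetric] R_eq
    using R_ne max_F max_R optimal_R by blast
qed

end
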